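(* Let $G=(V,E)$ be a surjective-only finite simple graph with $n$ nodes, $m$ edges and incidence matrix $A$, let $\lambda\in\mathbb{R}_{>0}^n$ be such that $(G,\lambda)$ is stabilizable, let $d=m-n$, and let $\Pi_{\ge0}=\{\mu\in\mathbb{R}_{\ge0}^m:A\mu=\lambda\}$ (a $d$-dimensional polytope). For a vertex $\mu$ of $\Pi_{\ge0}$, the following are equivalent: (i) $\mu$ is bijective; (ii) $\mu$ belongs to exactly $d$ facets of $\Pi_{\ge0}$ and none of the inequalities that are tight for $\mu$ is redundant. In particular, all vertices of $\Pi_{\ge0}$ are bijective if and only if the matching problem $(G,\lambda)$ is essential and the polytope $\Pi_{\ge0}$ is simple.
   Context: Incidence matrix: $a_{i,k}=1$ iff node $i$ is an endpoint of edge $k$. A graph is bijective if every connected component contains exactly one cycle and this cycle is odd; surjective-only means every connected component is non-bipartite but the graph is not a disjoint union of trees and odd-unicyclic graphs. A vertex $\mu$ of $\Pi_{\ge0}$ is called bijective if its support graph $(V,\{k\in E:\mu_k>0\})$ is bijective. $\Pi_{\ge0}$ is defined by the $m$ inequalities $\mu_k\ge0$, $k\in E$, within the affine space $\{A\mu=\lambda\}$. A face of a $d$-dimensional convex polytope is a non-empty intersection with a hyperplane such that the polytope lies in one of the two closed half-spaces; a facet is a face of dimension $d-1$; a vertex is a face of dimension $0$. The inequality $\mu_k\ge0$ is tight if some $\mu\in\Pi_{\ge0}$ has $\mu_k=0$ (tight for $\mu$ if $\mu_k=0$); it is redundant if $\Pi_{\ge0}=\{\mu\in\mathbb{R}^m:A\mu=\lambda,\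 \mu_\ell\ge0\ \forall\ell\in E\setminus\{k\}\}$, irredundant otherwise. $(G,\lambda)$ is essential if all tight inequalities are irredundant. $\Pi_{\ge0}$ is simple if every vertex belongs to exactly $d$ facets. Stabilizability of $(G,\lambda)$ is equivalent (for surjective $G$) to existence of $\mu\in\mathbb{R}_{>0}^m$ with $A\mu=\lambda$. *)

theory Defs
  imports "HOL-Analysis.Analysis"
begin

text \<open>A finite simple graph: nodes are the elements of a finite type 'v, edges the
elements of a finite type 'e; each edge k has a two-element set of endpoints ends k,
and distinct edges have distinct endpoint sets (no multi-edges).\<close>

definition simple_graph :: "('e::finite \<Rightarrow> 'v::finite set) \<Rightarrow> bool" where
  "simple_graph ends \<longleftrightarrow> inj ends \<and> (\<forall>k. card (ends k) = 2)"

definition incidence :: "('e::finite \<Rightarrow> 'v::finite set) \<Rightarrow> real ^ 'e ^ 'v" where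
  "incidence ends = (\<chi> i k. if i \<in> ends k then 1 else 0)"

definition adj :: "('e \<Rightarrow> 'v set) \<Rightarrow> 'e set \<Rightarrow> 'v \<Rightarrow> 'v \<Rightarrow> bool" where
  "adj ends F u w \<longleftrightarrow> (\<exists>k\<in>F. ends k = {u, w})"

definition component :: "('e \<Rightarrow> 'v set) \<Rightarrow> 'e set \<Rightarrow> 'v \<Rightarrow> 'v set" where
  "component ends F v = {u. (adj ends F)\<^sup>*\<^sup>* v u}"

definition is_cycle :: "('e \<Rightarrow> 'v set) \<Rightarrow> 'e set \<Rightarrow> 'e set \<Rightarrow> bool" where
  "is_cycle ends F C \<longleftrightarrow> (\<exists>vs. length vs \<ge> 3 \<and> distinct vs \<and>
      (\<forall>i<length vs. adj ends F (vs ! i) (vs ! (Suc i mod length vs))) \<and>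
      C = {k\<in>F. \<exists>i<length vs. ends k = {vs ! i, vs ! (Suc i mod length vs)}})"

definition cycle_in_comp :: "('e \<Rightarrow> 'v set) \<Rightarrow> 'e set \<Rightarrow> 'e set \<Rightarrow> 'v \<Rightarrow> bool" where
  "cycle_in_comp ends F C v \<longleftrightarrow> is_cycle ends F C \<and> (\<forall>k\<in>C. ends k \<subseteq> component ends F v)"

definition odd_unicyclic_comp :: "('e \<Rightarrow> 'v set) \<Rightarrow> 'e set \<Rightarrow> 'v \<Rightarrow> bool" where
  "odd_unicyclic_comp ends F v \<longleftrightarrow>
     (\<exists>C. cycle_in_comp ends F C v \<and> odd (card C) \<and>
          (\<forall>C'. cycle_in_comp ends F C' v \<longrightarrow> C' = C))"

definition tree_comp :: "('e \<Rightarrow> 'v set) \<Rightarrow> 'e set \<Rightarrow> 'v \<Rightarrow> bool" where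
  "tree_comp ends F v \<longleftrightarrow> \<not> (\<exists>C. cycle_in_comp ends F C v)"

definition bipartite_comp :: "('e \<Rightarrow> 'v set) \<Rightarrow> 'e set \<Rightarrow> 'v \<Rightarrow> bool" where
  "bipartite_comp ends F v \<longleftrightarrow>
     (\<exists>c :: 'v \<Rightarrow> bool. \<forall>u w. u \<in> component ends F v \<longrightarrow> adj ends F u w \<longrightarrow> c u \<noteq> c w)"

definition bijective_graph :: "('e \<Rightarrow> 'v set) \<Rightarrow> 'e set \<Rightarrow> bool" where
  "bijective_graph ends F \<longleftrightarrow> (\<forall>v. odd_unicyclic_comp ends F v)"

definition surjective_only :: "('e \<Rightarrow> 'v set) \<Rightarrow> 'e set \<Rightarrow> bool" where
  "surjective_only ends F \<longleftrightarrow> (\<forall>v. \<not> bipartite_comp ends F v) \<and>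
     \<not> (\<forall>v. tree_comp ends F v \<or> odd_unicyclic_comp ends F v)"

definition Pi_ge0 :: "('e::finite \<Rightarrow> 'v::finite set) \<Rightarrow> real ^ 'v \<Rightarrow> (real ^ 'e) set" where
  "Pi_ge0 ends lam = {\<mu>. (\<forall>k. \<mu> $ k \<ge> 0) \<and> incidence ends *v \<mu> = lam}"

definition is_vertex :: "(real ^ 'e::finite) set \<Rightarrow> real ^ 'e \<Rightarrow> bool" where
  "is_vertex P \<mu> \<longleftrightarrow> {\<mu>} face_of P"

definition support :: "real ^ 'e::finite \<Rightarrow> 'e set" where
  "support \<mu> = {k. \<mu> $ k > 0}"

definition bijective_vertex :: "('e::finite \<Rightarrow> 'v::finite set) \<Rightarrow> real ^ 'e \<Rightarrow> bool" where
  "bijective_vertex ends \<mu> \<longleftrightarrow> bijective_graph ends (support \<mu>)"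

definition tight :: "('e::finite \<Rightarrow> 'v::finite set) \<Rightarrow> real ^ 'v \<Rightarrow> 'e \<Rightarrow> bool" where
  "tight ends lam k \<longleftrightarrow> (\<exists>\<mu>\<in>Pi_ge0 ends lam. \<mu> $ k = 0)"

definition redundant :: "('e::finite \<Rightarrow> 'v::finite set) \<Rightarrow> real ^ 'v \<Rightarrow> 'e \<Rightarrow> bool" where
  "redundant ends lam k \<longleftrightarrow>
     Pi_ge0 ends lam = {\<mu>. incidence ends *v \<mu> = lam \<and> (\<forall>l. l \<noteq> k \<longrightarrow> \<mu> $ l \<ge> 0)}"

definition essential :: "('e::finite \<Rightarrow> 'v::finite set) \<Rightarrow> real ^ 'v \<Rightarrow> bool" where
  "essential ends lam \<longleftrightarrow> (\<forall>k. tight ends lam k \<longrightarrow> \<not> redundant ends lam k)"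

definition facets_through :: "(real ^ 'e::finite) set \<Rightarrow> real ^ 'e \<Rightarrow> (real ^ 'e) set set" where
  "facets_through P \<mu> = {F. F facet_of P \<and> \<mu> \<in> F}"

definition simple_polytope :: "(real ^ 'e::finite) set \<Rightarrow> int \<Rightarrow> bool" where
  "simple_polytope P d \<longleftrightarrow> (\<forall>\<mu>. is_vertex P \<mu> \<longrightarrow> int (card (facets_through P \<mu>)) = d)"

end

theory Submission
  imports Defs
begin

text \<open>A vertex \<open>\<mu>\<close> of the polytope is a basic solution: the incidence columns of its
  support \<open>T\<close> are linearly independent. For such \<open>T\<close> the columns span \<open>\<real>\<^sup>V\<close> exactly
  when no component of \<open>(V, T)\<close> is bipartite: a vector orthogonal to all columns alternates in
  sign along edges, and a 2-colouring of a component yields such a vector. Independence forces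
  every cycle to be odd, and together with spanning it allows at most one cycle per component,
  since deleting an edge of a second cycle would not shrink the span. So \<open>\<mu>\<close> is bijective iff
  \<open>|T| = n\<close>, i.e. iff \<open>\<mu>\<close> has \<open>d = m - n\<close> zero coordinates.

  On the polytope side, a strictly positive solution makes the facets exactly the sets
  \<open>{\<mu>\<^sub>k = 0}\<close> for the irredundant inequalities, one for each such \<open>k\<close>. Hence a vertex
  all of whose tight inequalities are irredundant lies on as many facets as it has zero
  coordinates, and these inequalities are automatically irredundant when the support columns
  span. The second statement follows because every tight inequality is tight at some vertex of
  the bounded polytope.\<close>

section \<open>Closed walks\<close>

definition closed_walk :: "('a \<Rightarrow> 'a \<Rightarrow> bool) \<Rightarrow> 'a list \<Rightarrow> bool" where
  "closed_walk R vs \<longleftrightarrow> (\<forall>i<length vs. R (vs!i) (vs!(Suc i mod length vs)))"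

lemma closed_walk_step:
  "closed_walk R vs \<Longrightarrow> i < length vs \<Longrightarrow> R (vs!i) (vs!(Suc i mod length vs))"
  by (simp add: closed_walk_def)

lemma odd_closed_walk_not_2_colorable:
  fixes c :: "'a \<Rightarrow> bool"
  assumes walk: "closed_walk R vs" and odd: "odd (length vs)"
    and col: "\<And>u w. u \<in> set vs \<Longrightarrow> R u w \<Longrightarrow> c u \<noteq> c w"
  shows False
proof -
  let ?L = "length vs"
  have L: "0 < ?L" using odd by (rule odd_pos)
  have step: "c (vs!i) \<noteq> c (vs!(Suc i mod ?L))" if "i < ?L" for i
    using walk that col[of "vs!i"] by (simp add: closed_walk_def)
  have alternate: "c (vs!i) \<longleftrightarrow> (c (vs!0) \<longleftrightarrow> even i)" if "i < ?L" for i
    using that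
  proof (induction i)
    case (Suc i)
    then show ?case using step[of i] by auto
  qed simp
  have "c (vs!(?L - 1)) \<noteq> c (vs!0)" using step[of "?L - 1"] L by simp
  then show False using alternate[of "?L - 1"] odd L by simp
qed

lemma closed_walk_rotate:
  assumes "closed_walk R vs"
  shows "closed_walk R (rotate n vs)"
proof -
  let ?L = "length vs"
  have "R (rotate n vs ! i) (rotate n vs ! (Suc i mod ?L))" if "i < ?L" for i
  proof -
    have bounds: "(i + n) mod ?L < ?L" "Suc i mod ?L < ?L" using that
      by (intro mod_less_divisor; linarith)+
    have "R (vs!((i + n) mod ?L)) (vs!(Suc ((i + n) mod ?L) mod ?L))"
      by (rule closed_walk_step[OF assms bounds(1)])
    moreover have "Suc ((i + n) mod ?L) mod ?L = (Suc i mod ?L + n) mod ?L"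
      by (metis add_Suc mod_Suc_eq mod_add_left_eq)
    ultimately show ?thesis using that bounds by (simp add: nth_rotate add.commute)
  qed
  then show ?thesis using assms by (simp add: closed_walk_def)
qed

lemma closed_walk_take:
  assumes "closed_walk R vs" "0 < k" "k < length vs" "vs!k = vs!0"
  shows "closed_walk R (take k vs)"
proof -
  have "R (take k vs ! t) (take k vs ! (Suc t mod k))" if t: "t < k" for t
  proof -
    have "R (vs!t) (vs!(Suc t mod length vs))" using closed_walk_step[OF assms(1), of t] assms(3) t
      by simp
    moreover have "Suc t mod length vs = Suc t" using assms(3) t by simp
    ultimately show ?thesis using assms(4) t by (cases "Suc t = k") auto
  qed
  then show ?thesis using assms by (simp add: closed_walk_def min_def)
qed

lemma closed_walk_drop:
  assumes "closed_walk R vs" "0 < k" "k < length vs" "vs!k = vs!0"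
  shows "closed_walk R (drop k vs)"
proof -
  let ?L = "length vs"
  have "R (drop k vs ! t) (drop k vs ! (Suc t mod (?L - k)))" if t: "t < ?L - k" for t
  proof -
    have "R (vs!(k + t)) (vs!(Suc (k + t) mod ?L))"
      using closed_walk_step[OF assms(1), of "k + t"] t by simp
    moreover have "Suc (k + t) mod ?L = (if Suc t = ?L - k then 0 else k + Suc t)"
    proof (cases "Suc t = ?L - k")
      case True
      then have "Suc (k + t) = ?L" using assms(3) by linarith
      then show ?thesis using True by simp
    qed (use t in simp)
    ultimately show ?thesis using assms(3,4) t by (cases "Suc t = ?L - k") auto
  qed
  then show ?thesis using assms by (simp add: closed_walk_def)
qed

text \<open>Cutting an odd closed walk at a repeated vertex leaves two shorter closed walks, one of
  them odd.\<close>

lemma odd_closed_walk_contains_odd_cycle: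
  assumes "closed_walk R vs" "odd (length vs)"
  shows "\<exists>ws. closed_walk R ws \<and> odd (length ws) \<and> distinct ws \<and> set ws \<subseteq> set vs"
  using assms
proof (induction "length vs" arbitrary: vs rule: less_induct)
  case less
  show ?case
  proof (cases "distinct vs")
    case False
    then obtain i j where ij: "i < j" "j < length vs" "vs!i = vs!j"
      by (metis distinct_conv_nth linorder_neqE_nat)
    define us where "us = rotate i vs"
    define k where "k = j - i"
    have walk: "closed_walk R us" using less.prems(1) by (simp add: us_def closed_walk_rotate)
    have k: "0 < k" "k < length us" using ij by (auto simp: k_def us_def)
    have "vs \<noteq> []" using ij by auto
    then have "us!0 = vs!i" "us!k = vs!j" using ij nth_rotate[of 0 vs i] nth_rotate[of k vs i]
      by (simp_all add: us_def k_def)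
    then have "us!k = us!0" using ij by simp
    then have walks: "closed_walk R (take k us)" "closed_walk R (drop k us)"
      using walk k by (auto intro: closed_walk_take closed_walk_drop)
    have sets: "set (take k us) \<subseteq> set vs" "set (drop k us) \<subseteq> set vs"
      using set_take_subset set_drop_subset by (fastforce simp: us_def)+
    have "odd (length (take k us)) \<or> odd (length (drop k us))"
      using less.prems(2) k by (auto simp: us_def)
    moreover have "length (take k us) < length vs" "length (drop k us) < length vs"
      using k by (auto simp: us_def)
    ultimately show ?thesis using less.hyps walks sets by (meson order_trans)
  qed (use less.prems in blast)
qed

lemma rtranclp_closed_walk_around:
  assumes j: "j < length vs"
    and steps: "\<And>i. i < length vs \<Longrightarrow> i \<noteq> j \<Longrightarrow> R (vs!i) (vs!(Suc i mod length vs))"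
  shows "R\<^sup>*\<^sup>* (vs!(Suc j mod length vs)) (vs!j)"
proof -
  let ?L = "length vs"
  have "R\<^sup>*\<^sup>* (vs!(Suc j mod ?L)) (vs!((Suc j + k) mod ?L))" if "k < ?L" for k
    using that
  proof (induction k)
    case (Suc k)
    have "(Suc j + k) mod ?L \<noteq> j"
    proof
      assume "(Suc j + k) mod ?L = j"
      then show False using Suc.prems j by (auto simp: mod_if split: if_splits)
    qed
    moreover have "(Suc j + k) mod ?L < ?L" using j by (intro mod_less_divisor) linarith
    ultimately have "R (vs!((Suc j + k) mod ?L)) (vs!(Suc ((Suc j + k) mod ?L) mod ?L))"
      using steps by blast
    moreover have "Suc ((Suc j + k) mod ?L) mod ?L = (Suc j + Suc k) mod ?L"
      by (simp add: mod_Suc_eq)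
    ultimately show ?case using Suc by (metis Suc_lessD rtranclp.rtrancl_into_rtrancl)
  qed simp
  moreover have "Suc j + (?L - 1) = j + ?L" using j by linarith
  ultimately show ?thesis using j by (metis diff_less less_nat_zero_code mod_add_self2 mod_less
        nat_neq_iff zero_less_one)
qed

lemma closed_walk_of_relpowp:
  assumes "(R ^^ n) v v" "0 < n"
  shows "\<exists>vs. closed_walk R vs \<and> length vs = n \<and> (\<forall>x\<in>set vs. R\<^sup>*\<^sup>* v x)"
proof -
  obtain f where f: "f 0 = v" "f n = v" "\<forall>i<n. R (f i) (f (Suc i))"
    using assms(1) by (auto simp: relpowp_fun_conv)
  define vs where "vs = map f [0..<n]"
  have "R (vs!i) (vs!(Suc i mod n))" if "i < n" for i
    using f that by (cases "Suc i = n") (auto simp: vs_def)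
  then have "closed_walk R vs" using assms(2) by (simp add: closed_walk_def vs_def)
  moreover have "R\<^sup>*\<^sup>* v (f i)" if "i \<le> n" for i
    using that f(3)
      by (induction i) (auto simp: f(1) Suc_le_eq intro: rtranclp.rtrancl_into_rtrancl)
  ultimately show ?thesis by (intro exI[of _ vs]) (auto simp: vs_def)
qed

lemma relpowp_symmetric:
  assumes "(R ^^ n) a b" and sym: "\<And>u w. R u w \<Longrightarrow> R w u"
  shows "(R ^^ n) b a"
  using assms(1)
proof (induction n arbitrary: b)
  case (Suc n)
  then obtain c where "(R ^^ n) a c" "R c b" by auto
  then show ?case using Suc.IH sym by (metis relpowp_Suc_I2)
qed simp

lemma relpowp_parity_coloring:
  assumes sym: "symp R" and no_odd: "\<And>n. (R ^^ n) v v \<Longrightarrow> even n"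
    and u: "R\<^sup>*\<^sup>* v u" and uw: "R u w"
  shows "(\<exists>n. even n \<and> (R ^^ n) v u) \<noteq> (\<exists>n. even n \<and> (R ^^ n) v w)"
proof
  let ?c = "\<lambda>x. \<exists>n. even n \<and> (R ^^ n) v x"
  assume same: "?c u = ?c w"
  have walk_of_parity: "\<exists>n. (R ^^ n) v x \<and> (?c x \<longleftrightarrow> even n)" if x: "R\<^sup>*\<^sup>* v x" for x
  proof (cases "?c x")
    case False
    obtain n where "(R ^^ n) v x" using rtranclp_imp_relpowp[OF x] by blast
    with False show ?thesis by blast
  qed blast
  have w: "R\<^sup>*\<^sup>* v w" using u uw by (rule rtranclp.rtrancl_into_rtrancl)
  obtain n1 n2 where n1: "(R ^^ n1) v u" "?c u \<longleftrightarrow> even n1"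
    and n2: "(R ^^ n2) v w" "?c w \<longleftrightarrow> even n2"
    using walk_of_parity[OF u] walk_of_parity[OF w] by blast
  have "(R ^^ n2) w v" using relpowp_symmetric[OF n2(1)] sym by (blast dest: sympD)
  with relpowp_Suc_I[OF n1(1) uw] have "(R ^^ (Suc n1 + n2)) v v" by (rule relpowp_trans)
  moreover have "odd (Suc n1 + n2)" using n1(2) n2(2) same by simp
  ultimately show False using no_odd by blast
qed

lemma in_span_image_inj_on:
  fixes f :: "'a \<Rightarrow> 'b::real_vector"
  assumes "inj_on f A" "finite A" "y \<in> span (f ` A)"
  obtains c where "y = (\<Sum>i\<in>A. c i *\<^sub>R f i)"
proof -
  obtain u where "y = (\<Sum>v\<in>f ` A. u v *\<^sub>R v)"
    using assms(2,3) real_vector.span_finite[of "f ` A"] by auto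
  then have "y = (\<Sum>i\<in>A. u (f i) *\<^sub>R f i)" by (simp add: sum.reindex[OF assms(1)])
  then show ?thesis by (rule that)
qed

lemma independent_image_inj_on_iff:
  fixes f :: "'a \<Rightarrow> 'b::real_vector"
  assumes inj: "inj_on f A" and fin: "finite A"
  shows "independent (f ` A) \<longleftrightarrow> (\<forall>c. (\<Sum>i\<in>A. c i *\<^sub>R f i) = 0 \<longrightarrow> (\<forall>i\<in>A. c i = 0))"
proof
  assume ind: "independent (f ` A)"
  show "\<forall>c. (\<Sum>i\<in>A. c i *\<^sub>R f i) = 0 \<longrightarrow> (\<forall>i\<in>A. c i = 0)"
  proof (intro allI impI ballI)
    fix c i assume sum0: "(\<Sum>i\<in>A. c i *\<^sub>R f i) = 0" and i: "i \<in> A"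
    let ?u = "\<lambda>v. c (inv_into A f v)"
    have "(\<Sum>v\<in>f ` A. ?u v *\<^sub>R v) = (\<Sum>i\<in>A. ?u (f i) *\<^sub>R f i)"
      by (rule sum.reindex[OF inj, unfolded comp_def])
    also have "\<dots> = 0" using sum0 inj by (simp add: inv_into_f_f cong: sum.cong)
    finally have "?u (f i) = 0"
      by (rule real_vector.independentD[OF ind finite_imageI[OF fin] order_refl _ imageI[OF i]])
    then show "c i = 0" using inj i by simp
  qed
next
  assume coeffs: "\<forall>c. (\<Sum>i\<in>A. c i *\<^sub>R f i) = 0 \<longrightarrow> (\<forall>i\<in>A. c i = 0)"
  show "independent (f ` A)"
  proof
    assume "dependent (f ` A)"
    then obtain u v where uv: "v \<in> f ` A" "u v \<noteq> 0" "(\<Sum>v\<in>f ` A. u v *\<^sub>R v) = 0"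
      using real_vector.dependent_finite[OF finite_imageI[OF fin]] by blast
    then obtain i where i: "i \<in> A" "v = f i" by blast
    have "(\<Sum>i\<in>A. u (f i) *\<^sub>R f i) = 0" using uv(3) by (simp add: sum.reindex[OF inj])
    then have "u (f i) = 0" using coeffs i(1) by (auto dest: spec[of _ "\<lambda>i. u (f i)"])
    then show False using uv(2) i(2) by simp
  qed
qed

lemma span_eq_UNIV_iff_card:
  fixes B :: "(real^'n::finite) set"
  assumes "independent B"
  shows "span B = UNIV \<longleftrightarrow> card B = CARD('n)"
proof
  assume "span B = UNIV"
  then show "card B = CARD('n)" using dim_span_eq_card_independent[OF assms] by simp
next
  assume "card B = CARD('n)"
  then have "UNIV \<subseteq> span B" using card_ge_dim_independent[of B UNIV] assms by simp
  then show "span B = UNIV" by blast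
qed

lemma alternating_sum_cyclic:
  fixes a :: "nat \<Rightarrow> 'b::real_vector"
  assumes "odd n"
  shows "(\<Sum>i<Suc n. (-1)^i *\<^sub>R (a i + a (Suc i mod Suc n))) = 0"
proof -
  have "(\<Sum>i<Suc n. (-1::real)^i *\<^sub>R a (Suc i mod Suc n)) =
      (\<Sum>i<n. (-1)^i *\<^sub>R a (Suc i)) + (-1)^n *\<^sub>R a 0"
    by (simp add: lessThan_Suc)
  moreover have "(\<Sum>i<Suc n. (-1::real)^i *\<^sub>R a i) = a 0 + (\<Sum>i<n. (-1)^(Suc i) *\<^sub>R a (Suc i))"
    by (subst sum.lessThan_Suc_shift) simp
  moreover have "(\<Sum>i<n. (-1::real)^(Suc i) *\<^sub>R a (Suc i)) = - (\<Sum>i<n. (-1)^i *\<^sub>R a (Suc i))"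
    by (simp add: sum_negf[symmetric])
  ultimately show ?thesis using assms by (simp add: scaleR_add_right sum.distrib)
qed

section \<open>Incidence vectors, components and cycles\<close>

abbreviation edge_vec :: "('e::finite \<Rightarrow> 'v::finite set) \<Rightarrow> 'e \<Rightarrow> real^'v" where
  "edge_vec ends k \<equiv> column k (incidence ends)"

lemma edge_vec_nth: "edge_vec ends k $ i = (if i \<in> ends k then 1 else 0)"
  by (simp add: column_def incidence_def)

lemma inj_edge_vec:
  assumes "simple_graph ends"
  shows "inj (edge_vec ends)"
proof (rule injI)
  fix k l assume eq: "edge_vec ends k = edge_vec ends l"
  have "i \<in> ends k \<longleftrightarrow> i \<in> ends l" for i
  proof -
    have "edge_vec ends k $ i = edge_vec ends l $ i" using eq by simp
    then show ?thesis by (simp add: edge_vec_nth split: if_splits)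
  qed
  then have "ends k = ends l" by blast
  then show "k = l" using assms by (simp add: simple_graph_def inj_def)
qed

lemma inj_on_edge_vec: "simple_graph ends \<Longrightarrow> inj_on (edge_vec ends) S"
  using inj_edge_vec inj_on_subset by blast

lemma ends_eq_doubleton:
  assumes "simple_graph ends"
  obtains u w where "u \<noteq> w" "ends k = {u, w}"
  using assms unfolding simple_graph_def by (meson card_2_iff)

lemma inner_edge_vec:
  assumes "ends k = {u, w}" "u \<noteq> w"
  shows "y \<bullet> edge_vec ends k = y $ u + y $ w"
proof -
  have "y \<bullet> edge_vec ends k = (\<Sum>i\<in>UNIV. if i \<in> ends k then y $ i else 0)"
    unfolding inner_vec_def edge_vec_nth by (rule sum.cong) auto
  also have "\<dots> = (\<Sum>i\<in>ends k. y $ i)"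
    by (simp add: sum.If_cases)
  finally show ?thesis using assms by simp
qed

lemma edge_vec_eq_axis:
  assumes "ends k = {u, w}" "u \<noteq> w"
  shows "edge_vec ends k = axis u 1 + axis w 1"
  using assms by (auto simp: vec_eq_iff edge_vec_nth axis_def)

lemma symp_adj: "symp (adj ends F)"
  by (auto simp: symp_def adj_def insert_commute)

lemma adj_irrefl:
  assumes "simple_graph ends"
  shows "\<not> adj ends F u u"
proof
  assume "adj ends F u u"
  then obtain k where "ends k = {u}" by (auto simp: adj_def)
  then have "card (ends k) = 1" by simp
  then show False using assms by (simp add: simple_graph_def)
qed

lemma adj_Diff_iff:
  assumes "simple_graph ends"
  shows "adj ends (F - {f}) u w \<longleftrightarrow> adj ends F u w \<and> ends f \<noteq> {u, w}"
proof
  assume "adj ends (F - {f}) u w"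
  then obtain k where k: "k \<in> F" "k \<noteq> f" "ends k = {u, w}" by (auto simp: adj_def)
  then have "ends f \<noteq> {u, w}" using assms by (metis simple_graph_def inj_eq)
  then show "adj ends F u w \<and> ends f \<noteq> {u, w}" using k by (auto simp: adj_def)
qed (auto simp: adj_def)

lemma component_refl: "v \<in> component ends F v"
  by (simp add: component_def)

lemma component_adj: "u \<in> component ends F v \<Longrightarrow> adj ends F u w \<Longrightarrow> w \<in> component ends F v"
  by (auto simp: component_def)

lemma component_eq:
  assumes "u \<in> component ends F v"
  shows "component ends F u = component ends F v"
proof -
  have "(adj ends F)\<^sup>*\<^sup>* v u" using assms by (simp add: component_def)
  moreover from this have "(adj ends F)\<^sup>*\<^sup>* u v" by (rule sympD[OF symp_rtranclp[OF symp_adj]])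
  ultimately show ?thesis by (auto simp: component_def intro: rtranclp_trans)
qed

definition cycle_edges :: "('e \<Rightarrow> 'v set) \<Rightarrow> 'e set \<Rightarrow> 'v list \<Rightarrow> 'e set" where
  "cycle_edges ends F vs = {k\<in>F. \<exists>i<length vs. ends k = {vs!i, vs!(Suc i mod length vs)}}"

lemma is_cycle_iff:
  "is_cycle ends F C \<longleftrightarrow>
     (\<exists>vs. 3 \<le> length vs \<and> distinct vs \<and> closed_walk (adj ends F) vs \<and> C = cycle_edges ends F vs)"
  unfolding is_cycle_def closed_walk_def cycle_edges_def ..

lemma is_cycle_subset: "is_cycle ends F C \<Longrightarrow> C \<subseteq> F"
  by (auto simp: is_cycle_iff cycle_edges_def)

lemma cycle_edges_Diff: "cycle_edges ends (F - {f}) vs = cycle_edges ends F vs - {f}"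
  by (auto simp: cycle_edges_def)

lemma cycle_edges_ends_subset:
  assumes "k \<in> cycle_edges ends F vs"
  shows "ends k \<subseteq> set vs"
proof -
  obtain i where i: "i < length vs" "ends k = {vs!i, vs!(Suc i mod length vs)}"
    using assms unfolding cycle_edges_def by blast
  have "Suc i mod length vs < length vs" using i(1) by (intro mod_less_divisor) linarith
  then have "vs!(Suc i mod length vs) \<in> set vs" by (rule nth_mem)
  moreover have "vs!i \<in> set vs" using i(1) by (rule nth_mem)
  ultimately show ?thesis using i(2) by simp
qed

lemma closed_walk_vertices_subset:
  assumes walk: "closed_walk (adj ends F) vs" and C: "\<forall>k\<in>cycle_edges ends F vs. ends k \<subseteq> X"
  shows "set vs \<subseteq> X"
proof
  fix x assume "x \<in> set vs"
  then obtain i where i: "i < length vs" "x = vs!i" by (auto simp: in_set_conv_nth)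
  then obtain k where k: "k \<in> F" "ends k = {vs!i, vs!(Suc i mod length vs)}"
    using closed_walk_step[OF walk i(1)] unfolding adj_def by blast
  then have "k \<in> cycle_edges ends F vs" using i(1) unfolding cycle_edges_def by blast
  then show "x \<in> X" using C i(2) k(2) by blast
qed

lemma Suc_mod_swap_imp_le_2:
  fixes i j L :: nat
  assumes "i < L" "j < L" and ij: "i = Suc j mod L" and ji: "j = Suc i mod L"
  shows "L \<le> 2"
proof (rule ccontr)
  assume "\<not> L \<le> 2"
  show False
  proof (cases "Suc j < L")
    case True
    then have i: "i = Suc j" using ij by simp
    show False
    proof (cases "Suc i < L")
      case True
      then have "j = Suc i" using ji by simp
      then show False using i by simp
    next
      case False
      then have "Suc i = L" using assms(1) by simp
      then have "j = 0" using ji by simp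
      then show False using \<open>Suc i = L\<close> i \<open>\<not> L \<le> 2\<close> by simp
    qed
  next
    case False
    then have "Suc j = L" using assms(2) by simp
    then have "i = 0" using ij by simp
    then have "j = 1" using ji \<open>\<not> L \<le> 2\<close> by simp
    then show False using \<open>Suc j = L\<close> \<open>\<not> L \<le> 2\<close> by simp
  qed
qed

lemma cycle_edge_ends_inj:
  assumes "distinct vs" "3 \<le> length vs" "i < length vs" "j < length vs"
    and "{vs!i, vs!(Suc i mod length vs)} = {vs!j, vs!(Suc j mod length vs)}"
  shows "i = j"
proof -
  let ?L = "length vs"
  have "0 < ?L" using assms(3) by linarith
  then have succ: "Suc i mod ?L < ?L" "Suc j mod ?L < ?L" by simp_all
  have index_eq: "vs!a = vs!b \<longleftrightarrow> a = b" if "a < ?L" "b < ?L" for a b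
    using nth_eq_iff_index_eq[OF assms(1) that] .
  from assms(5) have "vs!i = vs!j \<or> (vs!i = vs!(Suc j mod ?L) \<and> vs!(Suc i mod ?L) = vs!j)"
    by (auto simp: doubleton_eq_iff)
  then have "i = j \<or> (i = Suc j mod ?L \<and> j = Suc i mod ?L)"
    using index_eq assms(3,4) succ by metis
  then show ?thesis
  proof (elim disjE)
    assume "i = Suc j mod ?L \<and> j = Suc i mod ?L"
    then have "?L \<le> 2" using Suc_mod_swap_imp_le_2 assms(3,4) by blast
    then show ?thesis using assms(2) by simp
  qed
qed

lemma cycle_edges_enumeration:
  assumes g: "simple_graph ends" and "3 \<le> length vs" "distinct vs"
    and walk: "closed_walk (adj ends F) vs"
  obtains h where "bij_betw h {..<length vs} (cycle_edges ends F vs)"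
    "\<And>i. i < length vs \<Longrightarrow> h i \<in> F \<and> ends (h i) = {vs!i, vs!(Suc i mod length vs)}"
proof -
  let ?L = "length vs"
  have "\<forall>i\<in>{..<?L}. \<exists>k. k \<in> F \<and> ends k = {vs!i, vs!(Suc i mod ?L)}"
    using closed_walk_step[OF walk] by (auto simp: adj_def)
  then obtain h where h: "\<And>i. i < ?L \<Longrightarrow> h i \<in> F \<and> ends (h i) = {vs!i, vs!(Suc i mod ?L)}"
    by (auto dest!: bchoice)
  have "inj_on h {..<?L}"
  proof (rule inj_onI)
    fix i j assume ij: "i \<in> {..<?L}" "j \<in> {..<?L}" "h i = h j"
    then have "{vs!i, vs!(Suc i mod ?L)} = {vs!j, vs!(Suc j mod ?L)}"
      using h[of i] h[of j] by (metis lessThan_iff)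
    then show "i = j" using cycle_edge_ends_inj[OF assms(3,2)] ij(1,2) by blast
  qed
  moreover have "h ` {..<?L} = cycle_edges ends F vs"
  proof
    show "h ` {..<?L} \<subseteq> cycle_edges ends F vs"
    proof
      fix k assume "k \<in> h ` {..<?L}"
      then obtain i where "i < ?L" "k = h i" by blast
      then show "k \<in> cycle_edges ends F vs" using h[of i] unfolding cycle_edges_def by blast
    qed
    show "cycle_edges ends F vs \<subseteq> h ` {..<?L}"
    proof
      fix k assume "k \<in> cycle_edges ends F vs"
      then obtain i where "k \<in> F" "i < ?L" "ends k = {vs!i, vs!(Suc i mod ?L)}"
        unfolding cycle_edges_def by blast
      then have i: "i < ?L" "ends k = ends (h i)" using h[of i] by simp_all
      then have "k = h i" using g by (simp add: simple_graph_def inj_def)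
      then show "k \<in> h ` {..<?L}" using i by blast
    qed
  qed
  ultimately show ?thesis by (intro that[of h]) (simp_all add: bij_betw_def h)
qed

lemma card_cycle_edges:
  assumes "simple_graph ends" "3 \<le> length vs" "distinct vs" "closed_walk (adj ends F) vs"
  shows "card (cycle_edges ends F vs) = length vs"
proof -
  obtain h where "bij_betw h {..<length vs} (cycle_edges ends F vs)"
    using cycle_edges_enumeration[OF assms] by blast
  then show ?thesis by (simp add: bij_betw_same_card[symmetric])
qed

lemma cycle_edge_ends_connected:
  assumes g: "simple_graph ends" and cyc: "is_cycle ends T C" and f: "f \<in> C" "ends f = {a, b}"
  shows "(adj ends (T - {f}))\<^sup>*\<^sup>* a b"
proof -
  let ?R' = "adj ends (T - {f})"
  obtain vs where vs: "3 \<le> length vs" "distinct vs" "closed_walk (adj ends T) vs"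
    "C = cycle_edges ends T vs"
    using cyc unfolding is_cycle_iff by blast
  let ?L = "length vs"
  obtain j where j: "j < ?L" "ends f = {vs!j, vs!(Suc j mod ?L)}"
    using f(1) vs(4) unfolding cycle_edges_def by blast
  have "?R' (vs!i) (vs!(Suc i mod ?L))" if "i < ?L" "i \<noteq> j" for i
  proof -
    have "ends f \<noteq> {vs!i, vs!(Suc i mod ?L)}"
    proof
      assume "ends f = {vs!i, vs!(Suc i mod ?L)}"
      then have "j = i" using cycle_edge_ends_inj[OF vs(2,1) j(1) that(1)] j(2) by simp
      with that(2) show False by simp
    qed
    then show ?thesis using closed_walk_step[OF vs(3) that(1)] adj_Diff_iff[OF g] by blast
  qed
  then have around: "?R'\<^sup>*\<^sup>* (vs!(Suc j mod ?L)) (vs!j)"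
    by (rule rtranclp_closed_walk_around[OF j(1)])
  then have around': "?R'\<^sup>*\<^sup>* (vs!j) (vs!(Suc j mod ?L))"
    by (rule sympD[OF symp_rtranclp[OF symp_adj]])
  have "{a, b} = {vs!j, vs!(Suc j mod ?L)}" using f(2) j(2) by simp
  then have "(a = vs!j \<and> b = vs!(Suc j mod ?L)) \<or> (a = vs!(Suc j mod ?L) \<and> b = vs!j)"
    by (rule doubleton_eq_iff[THEN iffD1])
  then show ?thesis using around around' by (elim disjE conjE) simp_all
qed

lemma component_Diff_cycle_edge:
  assumes g: "simple_graph ends" and cyc: "is_cycle ends T C" and f: "f \<in> C"
  shows "component ends (T - {f}) = component ends T"
proof -
  let ?R = "adj ends T" and ?R' = "adj ends (T - {f})"
  have edge_path: "?R'\<^sup>*\<^sup>* u w" if "?R u w" for u w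
  proof (cases "ends f = {u, w}")
    case True
    then show ?thesis by (rule cycle_edge_ends_connected[OF g cyc f])
  next
    case False
    then show ?thesis using that adj_Diff_iff[OF g] by blast
  qed
  have "?R'\<^sup>*\<^sup>* u w" if "?R\<^sup>*\<^sup>* u w" for u w
    using that
  proof (induction rule: rtranclp_induct)
    case (step a b)
    show ?case by (rule rtranclp_trans[OF step.IH edge_path[OF step.hyps(2)]])
  qed simp
  moreover have "?R'\<^sup>*\<^sup>* \<le> ?R\<^sup>*\<^sup>*" by (rule rtranclp_mono) (auto simp: adj_def)
  ultimately have "?R'\<^sup>*\<^sup>* = ?R\<^sup>*\<^sup>*" by (intro ext iffI) (blast dest: predicate2D)+
  then show ?thesis by (intro ext) (simp add: component_def)
qed

lemma is_cycle_Diff: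
  assumes g: "simple_graph ends" and cyc: "is_cycle ends T C" and f: "f \<notin> C"
  shows "is_cycle ends (T - {f}) C"
proof -
  obtain vs where vs: "3 \<le> length vs" "distinct vs" "closed_walk (adj ends T) vs"
    "C = cycle_edges ends T vs"
    using cyc unfolding is_cycle_iff by blast
  have "ends f \<noteq> {vs!i, vs!(Suc i mod length vs)}" if i: "i < length vs" for i
  proof
    assume f_ends: "ends f = {vs!i, vs!(Suc i mod length vs)}"
    obtain k where "k \<in> T" "ends k = ends f"
      using closed_walk_step[OF vs(3) i] f_ends unfolding adj_def by auto
    moreover from this have "k = f" using g by (simp add: simple_graph_def inj_def)
    ultimately have "f \<in> cycle_edges ends T vs" using i f_ends unfolding cycle_edges_def by blast
    with f vs(4) show False by blast
  qed
  then have "closed_walk (adj ends (T - {f})) vs"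
    using closed_walk_step[OF vs(3)] by (simp add: closed_walk_def adj_Diff_iff[OF g])
  moreover have "C = cycle_edges ends (T - {f}) vs" using vs(4) f by (simp add: cycle_edges_Diff)
  ultimately show ?thesis using vs(1,2) unfolding is_cycle_iff by blast
qed

section \<open>Spanning edge sets\<close>

lemma cycle_in_comp_not_bipartite:
  fixes ends :: "'e::finite \<Rightarrow> 'v::finite set"
  assumes g: "simple_graph ends" and cyc: "cycle_in_comp ends T C v" "odd (card C)"
  shows "\<not> bipartite_comp ends T v"
proof
  assume "bipartite_comp ends T v"
  then obtain c :: "'v \<Rightarrow> bool" where c: "\<And>u w. u \<in> component ends T v \<Longrightarrow> adj ends T u w \<Longrightarrow> c u \<noteq> c w"
    unfolding bipartite_comp_def by blast
  from cyc(1) obtain vs where vs: "3 \<le> length vs" "distinct vs" "closed_walk (adj ends T) vs"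
    "C = cycle_edges ends T vs" "\<forall>k\<in>C. ends k \<subseteq> component ends T v"
    unfolding cycle_in_comp_def is_cycle_iff by blast
  have "set vs \<subseteq> component ends T v"
    using closed_walk_vertices_subset[OF vs(3)] vs(4,5) by blast
  moreover have "odd (length vs)" using cyc(2) card_cycle_edges[OF g vs(1-3)] vs(4) by simp
  ultimately show False
    using odd_closed_walk_not_2_colorable[OF vs(3), of c] c by blast
qed

lemma odd_relpowp_if_not_bipartite:
  assumes "\<not> bipartite_comp ends T v"
  shows "\<exists>n. odd n \<and> (adj ends T ^^ n) v v"
proof (rule ccontr)
  let ?R = "adj ends T"
  assume "\<nexists>n. odd n \<and> (?R ^^ n) v v"
  then have even: "\<And>n. (?R ^^ n) v v \<Longrightarrow> even n" by blast
  have "bipartite_comp ends T v"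
    unfolding bipartite_comp_def component_def mem_Collect_eq
  proof (intro exI[of _ "\<lambda>w. \<exists>n. even n \<and> (?R ^^ n) v w"] allI impI)
    fix u w assume "?R\<^sup>*\<^sup>* v u" "?R u w"
    then show "(\<exists>n. even n \<and> (?R ^^ n) v u) \<noteq> (\<exists>n. even n \<and> (?R ^^ n) v w)"
      using relpowp_parity_coloring[of ?R v u w] symp_adj even by blast
  qed
  with assms show False ..
qed

lemma odd_cycle_in_component:
  assumes g: "simple_graph ends" and nonbip: "\<not> bipartite_comp ends T v"
  obtains ws where "3 \<le> length ws" "distinct ws" "closed_walk (adj ends T) ws"
    "odd (length ws)" "set ws \<subseteq> component ends T v"
proof -
  let ?R = "adj ends T"
  obtain n where n: "odd n" "(?R ^^ n) v v" using odd_relpowp_if_not_bipartite[OF nonbip] by blast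
  obtain vs where vs: "closed_walk ?R vs" "length vs = n" "\<forall>x\<in>set vs. ?R\<^sup>*\<^sup>* v x"
    using closed_walk_of_relpowp[OF n(2) odd_pos[OF n(1)]] by blast
  obtain ws where ws: "closed_walk ?R ws" "odd (length ws)" "distinct ws" "set ws \<subseteq> set vs"
    using odd_closed_walk_contains_odd_cycle[OF vs(1)] vs(2) n(1) by blast
  have "length ws \<noteq> 1"
  proof
    assume "length ws = 1"
    then have "?R (ws!0) (ws!0)" using closed_walk_step[OF ws(1), of 0] by simp
    then show False using adj_irrefl[OF g] by blast
  qed
  then have "3 \<le> length ws" using ws(2) by presburger
  moreover have "set ws \<subseteq> component ends T v" using ws(4) vs(3) by (auto simp: component_def)
  ultimately show ?thesis using that ws(1-3) by blast
qed

lemma bipartite_comp_imp_span_neq_UNIV: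
  fixes ends :: "'e::finite \<Rightarrow> 'v::finite set"
  assumes g: "simple_graph ends" and bip: "bipartite_comp ends T v"
  shows "span (edge_vec ends ` T) \<noteq> UNIV"
proof
  assume sp: "span (edge_vec ends ` T) = UNIV"
  from bip obtain c :: "'v \<Rightarrow> bool"
    where c: "\<And>u w. u \<in> component ends T v \<Longrightarrow> adj ends T u w \<Longrightarrow> c u \<noteq> c w"
    unfolding bipartite_comp_def by blast
  define y :: "real^'v" where
    "y = (\<chi> w. if w \<in> component ends T v then (if c w then 1 else -1) else 0)"
  have "orthogonal y x" if "x \<in> edge_vec ends ` T" for x
  proof -
    from that obtain k where k: "k \<in> T" "x = edge_vec ends k" by blast
    obtain u w where uw: "u \<noteq> w" "ends k = {u, w}" using ends_eq_doubleton[OF g] by blast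
    have adj: "adj ends T u w" "adj ends T w u" using k(1) uw(2)
      by (auto simp: adj_def insert_commute)
    have "y $ u + y $ w = 0"
    proof (cases "u \<in> component ends T v")
      case True
      then show ?thesis using c[OF True adj(1)] component_adj[OF True adj(1)] by (simp add: y_def)
    next
      case False
      then have "w \<notin> component ends T v" using component_adj[of w ends T v u] adj(2) by blast
      then show ?thesis using False by (simp add: y_def)
    qed
    then show ?thesis using inner_edge_vec[of ends k u w y] uw k(2) by (simp add: orthogonal_def)
  qed
  then have "orthogonal y y" using orthogonal_to_span[of y "edge_vec ends ` T" y] sp by blast
  moreover have "y $ v \<noteq> 0" by (simp add: y_def component_def)
  ultimately show False by (auto simp: orthogonal_def)
qed

text \<open>A nonzero vector orthogonal to all columns alternates in sign along edges, so it is a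
  2-colouring of any component on which it does not vanish.\<close>

lemma span_neq_UNIV_imp_bipartite_comp:
  fixes ends :: "'e::finite \<Rightarrow> 'v::finite set"
  assumes g: "simple_graph ends" and sp: "span (edge_vec ends ` T) \<noteq> UNIV"
  shows "\<exists>v. bipartite_comp ends T v"
proof -
  obtain y :: "real^'v" where y: "y \<noteq> 0" "\<forall>x\<in>span (edge_vec ends ` T). y \<bullet> x = 0"
    using span_not_UNIV_orthogonal[OF sp] by blast
  have opp: "y $ w = - y $ u" if uw: "adj ends T u w" for u w
  proof -
    obtain k where k: "k \<in> T" "ends k = {u, w}" using uw by (auto simp: adj_def)
    have "u \<noteq> w" using adj_irrefl[OF g] uw by blast
    moreover have "y \<bullet> edge_vec ends k = 0" using y(2) k(1) by (simp add: span_base)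
    ultimately show ?thesis using inner_edge_vec[of ends k u w y] k(2) by simp
  qed
  obtain x where x: "y $ x \<noteq> 0" using y(1) by (auto simp: vec_eq_iff)
  have nonzero: "y $ u \<noteq> 0" if "(adj ends T)\<^sup>*\<^sup>* x u" for u
    using that
  proof (induction rule: rtranclp_induct)
    case (step a b)
    then show ?case using opp[of a b] by simp
  qed (rule x)
  have "bipartite_comp ends T x"
    unfolding bipartite_comp_def component_def mem_Collect_eq
  proof (intro exI[of _ "\<lambda>u. 0 < y $ u"] allI impI)
    fix u w assume "(adj ends T)\<^sup>*\<^sup>* x u" "adj ends T u w"
    then have "y $ u \<noteq> 0" "y $ w = - y $ u" using nonzero opp by blast+
    then show "(0 < y $ u) \<noteq> (0 < y $ w)" by auto
  qed
  then show ?thesis by blast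
qed

lemma span_edge_vecs_eq_UNIV_iff:
  fixes ends :: "'e::finite \<Rightarrow> 'v::finite set"
  assumes "simple_graph ends"
  shows "span (edge_vec ends ` T) = UNIV \<longleftrightarrow> (\<forall>v. \<not> bipartite_comp ends T v)"
  using bipartite_comp_imp_span_neq_UNIV[OF assms] span_neq_UNIV_imp_bipartite_comp[OF assms]
  by blast

lemma cycle_edge_vecs_alternating_sum:
  fixes ends :: "'e::finite \<Rightarrow> 'v::finite set"
  assumes g: "simple_graph ends" and walk: "closed_walk (adj ends T) vs"
    and even: "even (length vs)"
    and h: "\<And>i. i < length vs \<Longrightarrow> ends (h i) = {vs!i, vs!(Suc i mod length vs)}"
  shows "(\<Sum>i<length vs. (-1::real)^i *\<^sub>R edge_vec ends (h i)) = 0"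
proof (cases "vs = []")
  case False
  let ?L = "length vs"
  obtain n where n: "?L = Suc n" using False by (cases ?L) auto
  then have "odd n" using even by simp
  have "edge_vec ends (h i) = axis (vs!i) 1 + axis (vs!(Suc i mod ?L)) 1" if "i < ?L" for i
  proof -
    have "vs!i \<noteq> vs!(Suc i mod ?L)"
      using adj_irrefl[OF g, of T "vs!i"] closed_walk_step[OF walk that] by auto
    then show ?thesis
      using edge_vec_eq_axis[of ends "h i" "vs!i" "vs!(Suc i mod ?L)"] h[OF that] by simp
  qed
  then have "(\<Sum>i<?L. (-1::real)^i *\<^sub>R edge_vec ends (h i)) =
      (\<Sum>i<Suc n. (-1)^i *\<^sub>R (axis (vs!i) 1 + axis (vs!(Suc i mod Suc n)) 1))"
    using n by (intro sum.cong) simp_all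
  then show ?thesis using alternating_sum_cyclic[OF \<open>odd n\<close>, of "\<lambda>i. axis (vs!i) 1"] by simp
qed simp

lemma odd_card_cycle_if_independent:
  fixes ends :: "'e::finite \<Rightarrow> 'v::finite set"
  assumes g: "simple_graph ends" and ind: "independent (edge_vec ends ` T)"
    and cyc: "is_cycle ends T C"
  shows "odd (card C)"
proof (rule ccontr)
  assume even: "\<not> odd (card C)"
  obtain vs where vs: "3 \<le> length vs" "distinct vs" "closed_walk (adj ends T) vs"
    "C = cycle_edges ends T vs"
    using cyc unfolding is_cycle_iff by blast
  let ?L = "length vs"
  obtain h where h: "bij_betw h {..<?L} (cycle_edges ends T vs)"
    "\<And>i. i < ?L \<Longrightarrow> h i \<in> T \<and> ends (h i) = {vs!i, vs!(Suc i mod ?L)}"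
    using cycle_edges_enumeration[OF g vs(1-3)] by blast
  let ?f = "\<lambda>i. edge_vec ends (h i)"
  have "even ?L" using even card_cycle_edges[OF g vs(1-3)] vs(4) by simp
  then have sum0: "(\<Sum>i<?L. (-1::real)^i *\<^sub>R ?f i) = 0"
    using cycle_edge_vecs_alternating_sum[OF g vs(3)] h(2) by blast
  have inj: "inj_on ?f {..<?L}"
    using comp_inj_on[OF bij_betw_imp_inj_on[OF h(1)] inj_on_edge_vec[OF g]] by (simp add: comp_def)
  have "?f ` {..<?L} \<subseteq> edge_vec ends ` T" using h(2) by auto
  then have "independent (?f ` {..<?L})" using real_vector.independent_mono[OF ind] by blast
  then have coeffs: "\<forall>c. (\<Sum>i<?L. c i *\<^sub>R ?f i) = 0 \<longrightarrow> (\<forall>i\<in>{..<?L}. c i = 0)"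
    using independent_image_inj_on_iff[OF inj finite_lessThan] by blast
  have "0 \<in> {..<?L}" using vs(1) unfolding lessThan_iff by linarith
  from coeffs[rule_format, of "\<lambda>i. (-1)^i", OF sum0 this] show False by simp
qed

lemma bipartite_comp_Diff_disjoint:
  fixes ends :: "'e::finite \<Rightarrow> 'v::finite set"
  assumes g: "simple_graph ends" and away: "ends f \<inter> component ends T x = {}"
    and bip: "bipartite_comp ends (T - {f}) x"
    and comp: "component ends (T - {f}) x = component ends T x"
  shows "bipartite_comp ends T x"
proof -
  obtain c :: "'v \<Rightarrow> bool"
    where c: "\<And>u w. u \<in> component ends T x \<Longrightarrow> adj ends (T - {f}) u w \<Longrightarrow> c u \<noteq> c w"
    using bip unfolding bipartite_comp_def comp by blast
  show ?thesis
    unfolding bipartite_comp_def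
  proof (intro exI[of _ c] allI impI)
    fix u w assume u: "u \<in> component ends T x" and uw: "adj ends T u w"
    then have "ends f \<noteq> {u, w}" using away by blast
    then have "adj ends (T - {f}) u w" using uw adj_Diff_iff[OF g] by blast
    then show "c u \<noteq> c w" by (rule c[OF u])
  qed
qed

lemma not_bipartite_Diff_cycle_edge:
  fixes ends :: "'e::finite \<Rightarrow> 'v::finite set"
  assumes g: "simple_graph ends" and nonbip: "\<forall>x. \<not> bipartite_comp ends T x"
    and C1: "cycle_in_comp ends T C1 v" "odd (card C1)"
    and C2: "cycle_in_comp ends T C2 v" and f: "f \<in> C2" "f \<notin> C1"
  shows "\<not> bipartite_comp ends (T - {f}) x"
proof
  let ?T' = "T - {f}"
  assume bip: "bipartite_comp ends ?T' x"
  have C2_cycle: "is_cycle ends T C2" using C2 by (simp add: cycle_in_comp_def)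
  have comp: "component ends ?T' = component ends T"
    by (rule component_Diff_cycle_edge[OF g C2_cycle f(1)])
  show False
  proof (cases "x \<in> component ends T v")
    case True
    have "is_cycle ends ?T' C1"
      using is_cycle_Diff[OF g _ f(2)] C1(1) by (simp add: cycle_in_comp_def)
    moreover have "\<forall>k\<in>C1. ends k \<subseteq> component ends ?T' x"
      using C1(1) component_eq[OF True] comp by (simp add: cycle_in_comp_def)
    ultimately have "cycle_in_comp ends ?T' C1 x" by (simp add: cycle_in_comp_def)
    then show False using cycle_in_comp_not_bipartite[OF g _ C1(2)] bip by blast
  next
    case False
    have "ends f \<inter> component ends T x = {}"
    proof (rule ccontr)
      assume "ends f \<inter> component ends T x \<noteq> {}"
      then obtain u where u: "u \<in> ends f" "u \<in> component ends T x" by blast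
      then have "u \<in> component ends T v" using C2 f(1) unfolding cycle_in_comp_def by blast
      then have "x \<in> component ends T v"
        using component_eq[OF u(2)] component_eq[of u ends T v] component_refl[of x ends T] by simp
      with False show False ..
    qed
    then have "bipartite_comp ends T x" using bipartite_comp_Diff_disjoint[OF g _ bip] comp by simp
    with nonbip show False by blast
  qed
qed

text \<open>If a component contained a second cycle, deleting one of its edges outside the first
  (odd) cycle would keep every component non-bipartite, so the remaining edge vectors would still
  span: the deleted one depends on them.\<close>

lemma cycle_in_comp_subset:
  fixes ends :: "'e::finite \<Rightarrow> 'v::finite set"
  assumes g: "simple_graph ends" and ind: "independent (edge_vec ends ` T)"
    and nonbip: "\<forall>x. \<not> bipartite_comp ends T x"
    and C1: "cycle_in_comp ends T C1 v" and C2: "cycle_in_comp ends T C2 v"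
  shows "C2 \<subseteq> C1"
proof
  fix f assume f: "f \<in> C2"
  show "f \<in> C1"
  proof (rule ccontr)
    assume f': "f \<notin> C1"
    have "odd (card C1)"
      using odd_card_cycle_if_independent[OF g ind] C1 by (simp add: cycle_in_comp_def)
    then have "\<forall>x. \<not> bipartite_comp ends (T - {f}) x"
      using not_bipartite_Diff_cycle_edge[OF g nonbip C1 _ C2 f f'] by blast
    then have "span (edge_vec ends ` (T - {f})) = UNIV"
      using span_edge_vecs_eq_UNIV_iff[OF g] by blast
    moreover have "edge_vec ends ` (T - {f}) = edge_vec ends ` T - {edge_vec ends f}"
      using image_set_diff[OF inj_edge_vec[OF g]] by simp
    ultimately have "edge_vec ends f \<in> span (edge_vec ends ` T - {edge_vec ends f})" by simp
    moreover have "f \<in> T" using is_cycle_subset[of ends T C2] f C2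
      by (simp add: cycle_in_comp_def subset_iff)
    ultimately have "dependent (edge_vec ends ` T)"
      unfolding real_vector.dependent_def by (intro bexI[of _ "edge_vec ends f"] imageI)
    with ind show False by simp
  qed
qed

lemma bijective_graph_iff_span:
  fixes ends :: "'e::finite \<Rightarrow> 'v::finite set"
  assumes g: "simple_graph ends" and ind: "independent (edge_vec ends ` T)"
  shows "bijective_graph ends T \<longleftrightarrow> span (edge_vec ends ` T) = UNIV"
proof
  assume bij: "bijective_graph ends T"
  have "\<not> bipartite_comp ends T v" for v
  proof -
    obtain C where "cycle_in_comp ends T C v" "odd (card C)"
      using bij unfolding bijective_graph_def odd_unicyclic_comp_def by blast
    then show ?thesis by (rule cycle_in_comp_not_bipartite[OF g])
  qed
  then show "span (edge_vec ends ` T) = UNIV" using span_edge_vecs_eq_UNIV_iff[OF g] by blast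
next
  assume "span (edge_vec ends ` T) = UNIV"
  then have nonbip: "\<forall>v. \<not> bipartite_comp ends T v" using span_edge_vecs_eq_UNIV_iff[OF g] by blast
  have "odd_unicyclic_comp ends T v" for v
  proof -
    obtain ws where ws: "3 \<le> length ws" "distinct ws" "closed_walk (adj ends T) ws"
      "odd (length ws)" "set ws \<subseteq> component ends T v"
      using odd_cycle_in_component[OF g nonbip[rule_format]] by blast
    let ?C = "cycle_edges ends T ws"
    have "is_cycle ends T ?C" unfolding is_cycle_iff by (intro exI[of _ ws]) (simp add: ws(1-3))
    moreover have "\<forall>k\<in>?C. ends k \<subseteq> component ends T v"
      using cycle_edges_ends_subset ws(5) by (meson order_trans)
    ultimately have C: "cycle_in_comp ends T ?C v" by (simp add: cycle_in_comp_def)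
    have "odd (card ?C)" using card_cycle_edges[OF g ws(1-3)] ws(4) by simp
    moreover have "C' = ?C" if "cycle_in_comp ends T C' v" for C'
      using cycle_in_comp_subset[OF g ind nonbip C that] cycle_in_comp_subset[OF g ind nonbip that C]
      by (rule subset_antisym)
    ultimately show ?thesis unfolding odd_unicyclic_comp_def using C by blast
  qed
  then show "bijective_graph ends T" by (simp add: bijective_graph_def)
qed

section \<open>Polyhedra in standard form\<close>

definition nonneg_solutions :: "real^'e::finite^'v::finite \<Rightarrow> real^'v \<Rightarrow> (real^'e) set" where
  "nonneg_solutions A b = {x. (\<forall>k. 0 \<le> x $ k) \<and> A *v x = b}"

definition zero_face :: "(real^'e::finite) set \<Rightarrow> 'e \<Rightarrow> (real^'e) set" where
  "zero_face P k = P \<inter> {x. x $ k = 0}"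

definition relaxed_solutions :: "real^'e::finite^'v::finite \<Rightarrow> real^'v \<Rightarrow> 'e \<Rightarrow> (real^'e) set" where
  "relaxed_solutions A b k = {x. A *v x = b \<and> (\<forall>l. l \<noteq> k \<longrightarrow> 0 \<le> x $ l)}"

lemma matrix_vector_mult_restrict:
  fixes A :: "real^'e::finite^'v::finite"
  shows "A *v (\<chi> l. if l \<in> S then c l else 0) = (\<Sum>k\<in>S. c k *\<^sub>R column k A)"
proof -
  have "A *v (\<chi> l. if l \<in> S then c l else 0) = (\<Sum>k\<in>UNIV. (if k \<in> S then c k else 0) *\<^sub>R column k A)"
    by (simp add: matrix_mult_sum scalar_mult_eq_scaleR)
  also have "\<dots> = (\<Sum>k\<in>UNIV. if k \<in> S then c k *\<^sub>R column k A else 0)"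
    by (intro sum.cong) auto
  also have "\<dots> = (\<Sum>k\<in>S. c k *\<^sub>R column k A)"
    by (simp add: sum.If_cases)
  finally show ?thesis .
qed

lemma convex_nonneg_solutions:
  fixes A :: "real^'e::finite^'v::finite"
  shows "convex (nonneg_solutions A b)"
proof (rule convexI)
  fix x y and u v :: real
  assume "x \<in> nonneg_solutions A b" "y \<in> nonneg_solutions A b" "0 \<le> u" "0 \<le> v" "u + v = 1"
  then show "u *\<^sub>R x + v *\<^sub>R y \<in> nonneg_solutions A b"
    by (simp add: nonneg_solutions_def matrix_vector_right_distrib matrix_vector_mult_scaleR
        scaleR_left_distrib[symmetric])
qed

lemma polyhedron_nonneg_solutions:
  fixes A :: "real^'e::finite^'v::finite"
  shows "polyhedron (nonneg_solutions A b)"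
proof -
  have "nonneg_solutions A b =
      (\<Inter>k. {x. axis k 1 \<bullet> x \<ge> 0}) \<inter> (\<Inter>i. {x. row i A \<bullet> x = b $ i})"
  proof -
    have ax: "axis k 1 \<bullet> x = x $ k" for k and x :: "real^'e" by (simp add: inner_axis')
    have rw: "row i A \<bullet> x = (A *v x) $ i" for i x
      by (simp add: matrix_vector_mult_def row_def inner_vec_def)
    show ?thesis by (auto simp: nonneg_solutions_def ax rw vec_eq_iff)
  qed
  moreover have "polyhedron (\<Inter>k. {x::real^'e. axis k 1 \<bullet> x \<ge> 0})"
    by (rule polyhedron_Inter) (auto simp: polyhedron_halfspace_ge)
  moreover have "polyhedron (\<Inter>i. {x. row i A \<bullet> x = b $ i})"
    by (rule polyhedron_Inter) (auto simp: polyhedron_hyperplane)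
  ultimately show ?thesis by simp
qed

lemma zero_face_face_of:
  fixes A :: "real^'e::finite^'v::finite"
  shows "zero_face (nonneg_solutions A b) k face_of nonneg_solutions A b"
proof -
  have "zero_face (nonneg_solutions A b) k =
      nonneg_solutions A b \<inter> {x. (- axis k 1) \<bullet> x = 0}"
    by (auto simp: zero_face_def inner_axis')
  also have "\<dots> face_of nonneg_solutions A b"
    by (rule face_of_Int_supporting_hyperplane_le[OF convex_nonneg_solutions])
      (auto simp: inner_axis' nonneg_solutions_def)
  finally show ?thesis .
qed

lemma positive_solution_in_rel_interior:
  fixes A :: "real^'e::finite^'v::finite"
  assumes z: "z \<in> nonneg_solutions A b" "\<forall>k. 0 < z $ k"
  shows "z \<in> rel_interior (nonneg_solutions A b)"
  unfolding mem_rel_interior_ball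
proof (intro conjI exI[of _ "Min (range (\<lambda>k. z $ k))"])
  let ?e = "Min (range (\<lambda>k. z $ k))"
  show "z \<in> nonneg_solutions A b" by (rule z(1))
  show "0 < ?e" using z(2) by simp
  have "affine {x. A *v x = b}"
    by (auto simp: affine_def matrix_vector_right_distrib matrix_vector_mult_scaleR
        scaleR_left_distrib[symmetric])
  then have hull: "affine hull nonneg_solutions A b \<subseteq> {x. A *v x = b}"
    by (rule hull_minimal[rotated]) (auto simp: nonneg_solutions_def)
  show "ball z ?e \<inter> affine hull nonneg_solutions A b \<subseteq> nonneg_solutions A b"
  proof
    fix y assume y: "y \<in> ball z ?e \<inter> affine hull nonneg_solutions A b"
    have "0 \<le> y $ k" for k
    proof -
      have "norm (z - y) < ?e" using y by (simp add: dist_norm)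
      moreover have "\<bar>z $ k - y $ k\<bar> \<le> norm (z - y)" using component_le_norm_cart[of "z - y" k]
        by simp
      moreover have "?e \<le> z $ k" by (rule Min_le) auto
      ultimately show ?thesis by linarith
    qed
    then show "y \<in> nonneg_solutions A b" using y hull by (auto simp: nonneg_solutions_def)
  qed
qed

lemma face_subset_zero_face:
  fixes A :: "real^'e::finite^'v::finite"
  assumes F: "F face_of nonneg_solutions A b" and ne: "F \<noteq> nonneg_solutions A b"
  shows "\<exists>k. F \<subseteq> zero_face (nonneg_solutions A b) k"
proof (rule ccontr)
  let ?P = "nonneg_solutions A b"
  assume "\<nexists>k. F \<subseteq> zero_face ?P k"
  then have "\<forall>k. \<exists>x\<in>F. x $ k \<noteq> 0" using face_of_imp_subset[OF F] by (auto simp: zero_face_def)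
  then obtain X where X: "\<And>k. X k \<in> F" "\<And>k. X k $ k \<noteq> 0" by metis
  have FP: "F \<subseteq> ?P" by (rule face_of_imp_subset[OF F])
  then have X_nonneg: "0 \<le> X k $ l" for k l using X(1) by (auto simp: nonneg_solutions_def)
  define z where "z = (\<Sum>k\<in>UNIV. (1 / real CARD('e)) *\<^sub>R X k)"
  have "z \<in> F"
    unfolding z_def by (rule convex_sum) (use face_of_imp_convex[OF F] X(1) in auto)
  moreover have "0 < z $ l" for l
  proof -
    have "(1 / real CARD('e)) * X l $ l \<le> (\<Sum>k\<in>UNIV. (1 / real CARD('e)) * X k $ l)"
      by (rule member_le_sum) (use X_nonneg in auto)
    moreover have "0 < X l $ l" using X_nonneg[of l l] X(2)[of l] by linarith
    then have "0 < (1 / real CARD('e)) * X l $ l" by simp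
    moreover have "z $ l = (\<Sum>k\<in>UNIV. (1 / real CARD('e)) * X k $ l)" by (simp add: z_def)
    ultimately show ?thesis by linarith
  qed
  ultimately have "z \<in> F \<inter> rel_interior ?P"
    using positive_solution_in_rel_interior FP by blast
  then show False using face_of_disjoint_rel_interior[OF F ne] by blast
qed

lemma nonneg_step:
  fixes \<mu> w :: "real^'e::finite"
  assumes "\<forall>l. 0 \<le> \<mu> $ l" "\<forall>l. \<mu> $ l = 0 \<longrightarrow> w $ l = 0"
  obtains t where "0 < t" "\<forall>l. 0 \<le> \<mu> $ l + t * w $ l \<and> 0 \<le> \<mu> $ l - t * w $ l"
proof -
  define t where "t = Min (insert 1 ((\<lambda>l. \<mu> $ l / (\<bar>w $ l\<bar> + 1)) ` {l. 0 < \<mu> $ l}))"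
  have t: "0 < t" by (auto simp: t_def add_pos_nonneg)
  have "0 \<le> \<mu> $ l + t * w $ l \<and> 0 \<le> \<mu> $ l - t * w $ l" for l
  proof (cases "0 < \<mu> $ l")
    case True
    then have "t \<le> \<mu> $ l / (\<bar>w $ l\<bar> + 1)" by (auto simp: t_def)
    then have "t * (\<bar>w $ l\<bar> + 1) \<le> \<mu> $ l" by (simp add: pos_le_divide_eq add_pos_nonneg)
    then have "\<bar>t * w $ l\<bar> \<le> \<mu> $ l" using t by (simp add: abs_mult algebra_simps)
    then show ?thesis by linarith
  next
    case False
    then have "\<mu> $ l = 0" using assms(1) by (metis less_eq_real_def)
    then show ?thesis using assms(2) by simp
  qed
  then show ?thesis using that t by blast
qed

lemma vertex_kernel_trivial:
  fixes A :: "real^'e::finite^'v::finite"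
  assumes v: "is_vertex (nonneg_solutions A b) \<mu>" and Aw: "A *v w = 0"
    and supp: "\<forall>l. \<mu> $ l = 0 \<longrightarrow> w $ l = 0"
  shows "w = 0"
proof (rule ccontr)
  let ?P = "nonneg_solutions A b"
  assume "w \<noteq> 0"
  have \<mu>: "\<mu> extreme_point_of ?P" using v by (simp add: is_vertex_def face_of_singleton)
  then have \<mu>P: "\<forall>l. 0 \<le> \<mu> $ l" "A *v \<mu> = b"
    by (auto simp: extreme_point_of_def nonneg_solutions_def)
  obtain t where t: "0 < t" "\<forall>l. 0 \<le> \<mu> $ l + t * w $ l \<and> 0 \<le> \<mu> $ l - t * w $ l"
    using nonneg_step[OF \<mu>P(1) supp] by blast
  have "\<mu> + t *\<^sub>R w \<in> ?P" "\<mu> - t *\<^sub>R w \<in> ?P"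
    using t \<mu>P Aw by (auto simp: nonneg_solutions_def matrix_vector_right_distrib
        matrix_vector_mult_diff_distrib matrix_vector_mult_scaleR)
  moreover have "\<mu> + t *\<^sub>R w \<noteq> \<mu> - t *\<^sub>R w" using t(1) \<open>w \<noteq> 0\<close> by (auto simp: vec_eq_iff)
  then have "midpoint (\<mu> + t *\<^sub>R w) (\<mu> - t *\<^sub>R w) \<in> open_segment (\<mu> + t *\<^sub>R w) (\<mu> - t *\<^sub>R w)"
    by simp
  moreover have "midpoint (\<mu> + t *\<^sub>R w) (\<mu> - t *\<^sub>R w) = \<mu>"
    by (simp add: midpoint_def scaleR_add_right[symmetric])
  ultimately show False using \<mu> unfolding extreme_point_of_def by metis
qed

lemma irredundant_if_column_in_support_range:
  fixes A :: "real^'e::finite^'v::finite"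
  assumes \<mu>: "\<mu> \<in> nonneg_solutions A b" "\<mu> $ k = 0"
    and w: "A *v w = column k A" "\<forall>l. \<mu> $ l = 0 \<longrightarrow> w $ l = 0"
  shows "nonneg_solutions A b \<noteq> relaxed_solutions A b k"
proof
  assume eq: "nonneg_solutions A b = relaxed_solutions A b k"
  obtain t where t: "0 < t" "\<forall>l. 0 \<le> \<mu> $ l + t * w $ l \<and> 0 \<le> \<mu> $ l - t * w $ l"
    using nonneg_step \<mu>(1) w(2) unfolding nonneg_solutions_def by blast
  define q where "q = \<mu> + t *\<^sub>R (w - axis k 1)"
  have "A *v q = b"
    using \<mu>(1) w(1) by (simp add: q_def nonneg_solutions_def matrix_vector_right_distrib
        matrix_vector_mult_scaleR matrix_vector_mult_diff_distrib matrix_vector_mult_basis)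
  moreover have "0 \<le> q $ l" if "l \<noteq> k" for l using t(2) that by (simp add: q_def axis_def)
  ultimately have "q \<in> nonneg_solutions A b" using eq by (simp add: relaxed_solutions_def)
  moreover have "q $ k < 0" using t(1) \<mu>(2) w(2) by (simp add: q_def)
  ultimately show False by (simp add: nonneg_solutions_def) (meson not_le)
qed

locale strictly_feasible =
  fixes A :: "real^'e::finite^'v::finite" and b :: "real^'v"
  assumes strictly_feasible: "\<exists>p. (\<forall>k. 0 < p $ k) \<and> A *v p = b"
begin

lemma zero_face_neq: "zero_face (nonneg_solutions A b) k \<noteq> nonneg_solutions A b"
proof
  obtain p where p: "\<forall>k. 0 < p $ k" "A *v p = b" using strictly_feasible by blast
  then have "p \<in> nonneg_solutions A b" by (simp add: nonneg_solutions_def less_imp_le)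
  moreover assume "zero_face (nonneg_solutions A b) k = nonneg_solutions A b"
  ultimately have "p $ k = 0" by (auto simp: zero_face_def)
  then show False using p(1) by (metis less_irrefl)
qed

lemma facet_imp_zero_face:
  assumes F: "F facet_of nonneg_solutions A b"
  shows "\<exists>k. F = zero_face (nonneg_solutions A b) k"
proof -
  let ?P = "nonneg_solutions A b"
  have face: "F face_of ?P" and dim: "aff_dim F = aff_dim ?P - 1"
    using F by (auto simp: facet_of_def)
  then obtain k where k: "F \<subseteq> zero_face ?P k"
    using face_subset_zero_face by fastforce
  have "aff_dim (zero_face ?P k) < aff_dim ?P"
    by (rule face_of_aff_dim_lt[OF convex_nonneg_solutions zero_face_face_of zero_face_neq])
  moreover have "F face_of zero_face ?P k"
    using face_of_subset[OF face k] by (simp add: zero_face_def)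
  then have "F = zero_face ?P k \<or> aff_dim F < aff_dim (zero_face ?P k)"
    using face_of_aff_dim_lt[OF face_of_imp_convex[OF zero_face_face_of]] by blast
  ultimately show ?thesis using dim by auto
qed

lemma irredundant_point:
  assumes "nonneg_solutions A b \<noteq> relaxed_solutions A b k"
  obtains r where "r \<in> nonneg_solutions A b" "r $ k = 0" "\<forall>l. l \<noteq> k \<longrightarrow> 0 < r $ l"
proof -
  obtain p where p: "\<forall>k. 0 < p $ k" "A *v p = b" using strictly_feasible by blast
  have "nonneg_solutions A b \<subseteq> relaxed_solutions A b k"
    by (auto simp: nonneg_solutions_def relaxed_solutions_def)
  with assms obtain q where "q \<in> relaxed_solutions A b k" "q \<notin> nonneg_solutions A b" by blast
  then have q: "A *v q = b" "\<forall>l. l \<noteq> k \<longrightarrow> 0 \<le> q $ l" "q $ k < 0"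
    by (auto simp: nonneg_solutions_def relaxed_solutions_def) (metis not_le)
  define t where "t = p $ k / (p $ k - q $ k)"
  have "0 < p $ k" using p(1) by blast
  then have t: "0 < t" "t < 1" using q(3) by (auto simp: t_def divide_simps)
  define r where "r = (1 - t) *\<^sub>R p + t *\<^sub>R q"
  have "A *v r = b"
    using p(2) q(1) by (simp add: r_def matrix_vector_right_distrib matrix_vector_mult_scaleR
        scaleR_left_distrib[symmetric])
  moreover have "r $ k = 0"
    using \<open>0 < p $ k\<close> q(3) by (simp add: r_def t_def field_simps)
  moreover have "0 < r $ l" if "l \<noteq> k" for l
  proof -
    have "0 < (1 - t) * p $ l" "0 \<le> t * q $ l" using t p(1) q(2) that by auto
    then show ?thesis by (simp add: r_def)
  qed
  moreover have "0 \<le> r $ l" for l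
    using \<open>r $ k = 0\<close> \<open>\<And>l. l \<noteq> k \<Longrightarrow> 0 < r $ l\<close> by (cases "l = k") (auto intro: less_imp_le)
  ultimately have "r \<in> nonneg_solutions A b" "r $ k = 0" "\<forall>l. l \<noteq> k \<longrightarrow> 0 < r $ l"
    by (auto simp: nonneg_solutions_def)
  then show ?thesis by (rule that)
qed

lemma zero_face_facet_if_irredundant:
  assumes "nonneg_solutions A b \<noteq> relaxed_solutions A b k"
  shows "zero_face (nonneg_solutions A b) k facet_of nonneg_solutions A b"
proof -
  let ?P = "nonneg_solutions A b"
  obtain r where r: "r \<in> ?P" "r $ k = 0" "\<forall>l. l \<noteq> k \<longrightarrow> 0 < r $ l"
    using irredundant_point[OF assms] by blast
  then have "r \<in> zero_face ?P k" by (simp add: zero_face_def)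
  then obtain F where F: "F facet_of ?P" "zero_face ?P k \<subseteq> F"
    using face_of_polyhedron_subset_facet[OF polyhedron_nonneg_solutions zero_face_face_of]
      zero_face_neq by blast
  obtain l where l: "F = zero_face ?P l" using facet_imp_zero_face[OF F(1)] by blast
  have "r $ l = 0" using \<open>r \<in> zero_face ?P k\<close> F(2) l by (auto simp: zero_face_def)
  then have "l = k" using r(3) by (metis less_irrefl)
  then show ?thesis using F(1) l by simp
qed

lemma zero_face_eq_imp_eq:
  assumes "nonneg_solutions A b \<noteq> relaxed_solutions A b k"
    and "zero_face (nonneg_solutions A b) k = zero_face (nonneg_solutions A b) l"
  shows "k = l"
proof -
  obtain r where r: "r \<in> nonneg_solutions A b" "r $ k = 0" "\<forall>l. l \<noteq> k \<longrightarrow> 0 < r $ l"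
    using irredundant_point[OF assms(1)] by blast
  then have "r $ l = 0" using assms(2) by (auto simp: zero_face_def)
  then show ?thesis using r(3) by (metis less_irrefl)
qed

lemma card_facets_through:
  assumes \<mu>: "\<mu> \<in> nonneg_solutions A b"
    and irredundant: "\<forall>k. \<mu> $ k = 0 \<longrightarrow> nonneg_solutions A b \<noteq> relaxed_solutions A b k"
  shows "card (facets_through (nonneg_solutions A b) \<mu>) = card {k. \<mu> $ k = 0}"
proof -
  let ?P = "nonneg_solutions A b"
  have "facets_through ?P \<mu> = zero_face ?P ` {k. \<mu> $ k = 0}"
  proof
    show "facets_through ?P \<mu> \<subseteq> zero_face ?P ` {k. \<mu> $ k = 0}"
    proof
      fix F assume "F \<in> facets_through ?P \<mu>"
      then have F: "F facet_of ?P" "\<mu> \<in> F" by (auto simp: facets_through_def)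
      obtain l where "F = zero_face ?P l" using facet_imp_zero_face[OF F(1)] by blast
      moreover from this have "\<mu> $ l = 0" using F(2) by (simp add: zero_face_def)
      ultimately show "F \<in> zero_face ?P ` {k. \<mu> $ k = 0}" by blast
    qed
    show "zero_face ?P ` {k. \<mu> $ k = 0} \<subseteq> facets_through ?P \<mu>"
      using irredundant zero_face_facet_if_irredundant \<mu>
      by (auto simp: facets_through_def zero_face_def)
  qed
  moreover have "inj_on (zero_face ?P) {k. \<mu> $ k = 0}"
    using irredundant zero_face_eq_imp_eq by (auto intro!: inj_onI)
  ultimately show ?thesis by (simp add: card_image)
qed

end

lemma face_contains_vertex:
  fixes S :: "'a::euclidean_space set"
  assumes "compact S" "convex S" "F face_of S" "F \<noteq> {}"
  obtains x where "x \<in> F" "{x} face_of S"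
proof -
  have "compact F" "convex F" using assms face_of_imp_compact face_of_imp_convex by blast+
  then obtain x where "x extreme_point_of F"
    using extreme_point_exists_convex assms(4) by blast
  then show ?thesis
    using that extreme_point_of_face[OF assms(3)] by (auto simp: face_of_singleton)
qed

section \<open>The matching polytope\<close>

lemma Pi_ge0_eq_nonneg_solutions: "Pi_ge0 ends lam = nonneg_solutions (incidence ends) lam"
  by (simp add: Pi_ge0_def nonneg_solutions_def)

lemma redundant_iff:
  "redundant ends lam k \<longleftrightarrow>
     nonneg_solutions (incidence ends) lam = relaxed_solutions (incidence ends) lam k"
  by (simp add: redundant_def Pi_ge0_eq_nonneg_solutions relaxed_solutions_def)

lemma bounded_Pi_ge0:
  fixes ends :: "'e::finite \<Rightarrow> 'v::finite set"
  assumes g: "simple_graph ends"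
  shows "bounded (Pi_ge0 ends lam)"
proof -
  have entry_bound: "x $ k \<le> lam $ u" if x: "x \<in> Pi_ge0 ends lam" and u: "u \<in> ends k" for x k u
  proof -
    have "x $ k = incidence ends $ u $ k * x $ k" using u by (simp add: incidence_def)
    also have "\<dots> \<le> (\<Sum>l\<in>UNIV. incidence ends $ u $ l * x $ l)"
      by (rule member_le_sum) (use x in \<open>auto simp: incidence_def Pi_ge0_def\<close>)
    also have "\<dots> = lam $ u" using x by (auto simp: Pi_ge0_def matrix_vector_mult_def vec_eq_iff)
    finally show ?thesis .
  qed
  then have coord_bound: "\<bar>x $ k\<bar> \<le> (\<Sum>i\<in>UNIV. \<bar>lam $ i\<bar>)" if x: "x \<in> Pi_ge0 ends lam" for x k
  proof -
    obtain u w where "ends k = {u, w}" using ends_eq_doubleton[OF g] by blast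
    then have "\<bar>x $ k\<bar> \<le> \<bar>lam $ u\<bar>" using x entry_bound[of x u k] by (auto simp: Pi_ge0_def)
    also have "\<dots> \<le> (\<Sum>i\<in>UNIV. \<bar>lam $ i\<bar>)" by (rule member_le_sum) auto
    finally show ?thesis .
  qed
  have "norm x \<le> real CARD('e) * (\<Sum>i\<in>UNIV. \<bar>lam $ i\<bar>)" if "x \<in> Pi_ge0 ends lam" for x
  proof -
    have "norm x \<le> (\<Sum>k\<in>UNIV. \<bar>x $ k\<bar>)" by (rule norm_le_l1_cart)
    also have "\<dots> \<le> (\<Sum>k\<in>(UNIV::'e set). \<Sum>i\<in>UNIV. \<bar>lam $ i\<bar>)"
      using coord_bound[OF that] by (intro sum_mono) blast
    finally show ?thesis by simp
  qed
  then show ?thesis unfolding bounded_iff by blast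
qed

lemma card_support_add_card_zeros:
  fixes \<mu> :: "real^'e::finite"
  assumes "\<forall>k. 0 \<le> \<mu> $ k"
  shows "card (support \<mu>) + card {k. \<mu> $ k = 0} = CARD('e)"
proof -
  have "support \<mu> \<union> {k. \<mu> $ k = 0} = UNIV" using assms by (auto simp: support_def less_le)
  moreover have "support \<mu> \<inter> {k. \<mu> $ k = 0} = {}" by (auto simp: support_def)
  ultimately show ?thesis by (metis card_Un_disjoint finite)
qed

lemma vertex_independent_support:
  fixes ends :: "'e::finite \<Rightarrow> 'v::finite set"
  assumes g: "simple_graph ends" and v: "is_vertex (nonneg_solutions (incidence ends) lam) \<mu>"
  shows "independent (edge_vec ends ` support \<mu>)"
  unfolding independent_image_inj_on_iff[OF inj_on_edge_vec[OF g] finite]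
proof (intro allI impI ballI)
  fix c i assume sum0: "(\<Sum>k\<in>support \<mu>. c k *\<^sub>R edge_vec ends k) = 0" and i: "i \<in> support \<mu>"
  let ?w = "\<chi> l. if l \<in> support \<mu> then c l else 0"
  have "incidence ends *v ?w = 0" using sum0 by (simp add: matrix_vector_mult_restrict)
  moreover have "\<forall>l. \<mu> $ l = 0 \<longrightarrow> ?w $ l = 0" by (simp add: support_def)
  ultimately have "?w = 0" by (rule vertex_kernel_trivial[OF v])
  moreover have "?w $ i = c i" using i by simp
  ultimately show "c i = 0" by simp
qed

lemma irredundant_if_support_spans:
  fixes ends :: "'e::finite \<Rightarrow> 'v::finite set"
  assumes g: "simple_graph ends"
    and \<mu>: "\<mu> \<in> nonneg_solutions (incidence ends) lam" "\<mu> $ k = 0"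
    and span: "span (edge_vec ends ` support \<mu>) = UNIV"
  shows "\<not> redundant ends lam k"
proof -
  obtain c where c: "edge_vec ends k = (\<Sum>l\<in>support \<mu>. c l *\<^sub>R edge_vec ends l)"
    using in_span_image_inj_on[OF inj_on_edge_vec[OF g] finite] span by blast
  let ?w = "\<chi> l. if l \<in> support \<mu> then c l else 0"
  have "incidence ends *v ?w = edge_vec ends k" using c by (simp add: matrix_vector_mult_restrict)
  moreover have "\<forall>l. \<mu> $ l = 0 \<longrightarrow> ?w $ l = 0" by (simp add: support_def)
  ultimately show ?thesis
    using irredundant_if_column_in_support_range[OF \<mu>] by (simp add: redundant_iff)
qed

lemma vertex_bijective_iff:
  fixes ends :: "'e::finite \<Rightarrow> 'v::finite set"
  assumes g: "simple_graph ends"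
    and stabilizable: "\<exists>p. (\<forall>k. 0 < p $ k) \<and> incidence ends *v p = lam"
    and v: "is_vertex (Pi_ge0 ends lam) \<mu>"
  shows "bijective_vertex ends \<mu> \<longleftrightarrow>
    int (card (facets_through (Pi_ge0 ends lam) \<mu>)) = int CARD('e) - int CARD('v) \<and>
    (\<forall>k. \<mu> $ k = 0 \<longrightarrow> \<not> redundant ends lam k)"
    (is "_ \<longleftrightarrow> ?count \<and> ?irredundant")
proof -
  let ?P = "nonneg_solutions (incidence ends) lam" and ?S = "support \<mu>" and ?Z = "{k. \<mu> $ k = 0}"
  have v': "is_vertex ?P \<mu>" using v by (simp add: Pi_ge0_eq_nonneg_solutions)
  have \<mu>: "\<mu> \<in> ?P" using v' by (simp add: is_vertex_def face_of_singleton extreme_point_of_def)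
  have ind: "independent (edge_vec ends ` ?S)" by (rule vertex_independent_support[OF g v'])
  have "card (edge_vec ends ` ?S) = card ?S"
    by (rule card_image[OF inj_on_edge_vec[OF g]])
  then have bij_iff: "bijective_vertex ends \<mu> \<longleftrightarrow> card ?S = CARD('v)"
    using bijective_graph_iff_span[OF g ind] span_eq_UNIV_iff_card[OF ind]
    by (simp add: bijective_vertex_def)
  have card_split: "card ?S + card ?Z = CARD('e)"
    using \<mu> by (intro card_support_add_card_zeros) (simp add: nonneg_solutions_def)
  have facets: "card (facets_through (Pi_ge0 ends lam) \<mu>) = card ?Z" if ?irredundant
    using strictly_feasible.card_facets_through[OF _ \<mu>] stabilizable that
    by (simp add: strictly_feasible_def redundant_iff Pi_ge0_eq_nonneg_solutions)
  show ?thesis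
  proof
    assume "bijective_vertex ends \<mu>"
    then have "span (edge_vec ends ` ?S) = UNIV"
      using bijective_graph_iff_span[OF g ind] by (simp add: bijective_vertex_def)
    then have ?irredundant using irredundant_if_support_spans[OF g \<mu>] by blast
    moreover have "card ?S = CARD('v)" using bij_iff \<open>bijective_vertex ends \<mu>\<close> by blast
    ultimately show "?count \<and> ?irredundant" using facets card_split by simp
  next
    assume "?count \<and> ?irredundant"
    then have "card ?S = CARD('v)" using facets card_split by simp
    then show "bijective_vertex ends \<mu>" using bij_iff by blast
  qed
qed

lemma tight_imp_vertex_on_zero_face:
  fixes ends :: "'e::finite \<Rightarrow> 'v::finite set"
  assumes g: "simple_graph ends" and "tight ends lam k"
  obtains \<mu> where "is_vertex (Pi_ge0 ends lam) \<mu>" "\<mu> $ k = 0"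
proof -
  let ?P = "nonneg_solutions (incidence ends) lam"
  have "compact ?P"
    using bounded_Pi_ge0[OF g] polyhedron_imp_closed[OF polyhedron_nonneg_solutions]
    by (simp add: compact_eq_bounded_closed Pi_ge0_eq_nonneg_solutions)
  moreover have "zero_face ?P k \<noteq> {}"
    using assms(2) by (auto simp: tight_def zero_face_def Pi_ge0_eq_nonneg_solutions)
  ultimately obtain \<mu> where "\<mu> \<in> zero_face ?P k" "{\<mu>} face_of ?P"
    using face_contains_vertex[OF _ convex_nonneg_solutions zero_face_face_of] by blast
  then show ?thesis
    using that by (simp add: is_vertex_def zero_face_def Pi_ge0_eq_nonneg_solutions)
qed

lemma all_vertices_bijective_iff:
  fixes ends :: "'e::finite \<Rightarrow> 'v::finite set"
  assumes g: "simple_graph ends"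
    and stabilizable: "\<exists>p. (\<forall>k. 0 < p $ k) \<and> incidence ends *v p = lam"
  shows "(\<forall>\<mu>. is_vertex (Pi_ge0 ends lam) \<mu> \<longrightarrow> bijective_vertex ends \<mu>) \<longleftrightarrow>
    essential ends lam \<and> simple_polytope (Pi_ge0 ends lam) (int CARD('e) - int CARD('v))"
    (is "?all \<longleftrightarrow> ?essential \<and> ?simple")
proof
  assume all: ?all
  have "\<not> redundant ends lam k" if tight: "tight ends lam k" for k
  proof -
    obtain \<mu> where "is_vertex (Pi_ge0 ends lam) \<mu>" "\<mu> $ k = 0"
      using tight_imp_vertex_on_zero_face[OF g tight] by blast
    then show ?thesis using all vertex_bijective_iff[OF g stabilizable] by blast
  qed
  then show "?essential \<and> ?simple"
    using all vertex_bijective_iff[OF g stabilizable]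
    by (simp add: essential_def simple_polytope_def)
next
  assume "?essential \<and> ?simple"
  moreover have "\<mu> \<in> Pi_ge0 ends lam" if "is_vertex (Pi_ge0 ends lam) \<mu>" for \<mu>
    using that by (simp add: is_vertex_def face_of_singleton extreme_point_of_def)
  ultimately show ?all
    using vertex_bijective_iff[OF g stabilizable]
    by (auto simp: essential_def simple_polytope_def tight_def)
qed

theorem proposition5p13:
  fixes ends :: "'e::finite \<Rightarrow> 'v::finite set"
    and lam :: "real ^ 'v"
  assumes G: "simple_graph ends"
    and surj_only: "surjective_only ends UNIV"
    and lam_pos: "\<forall>i. lam $ i > 0"
    and stabilizable: "\<exists>\<mu> :: real ^ 'e. (\<forall>k. \<mu> $ k > 0) \<and> incidence ends *v \<mu> = lam"
  defines "d \<equiv> int CARD('e) - int CARD('v)"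
    and "P \<equiv> Pi_ge0 ends lam"
  shows "(\<forall>\<mu>. is_vertex P \<mu> \<longrightarrow>
            (bijective_vertex ends \<mu> \<longleftrightarrow>
              (int (card (facets_through P \<mu>)) = d \<and>
               (\<forall>k. \<mu> $ k = 0 \<longrightarrow> \<not> redundant ends lam k))))
       \<and> ((\<forall>\<mu>. is_vertex P \<mu> \<longrightarrow> bijective_vertex ends \<mu>) \<longleftrightarrow>
            (essential ends lam \<and> simple_polytope P d))"
  unfolding d_def P_def
  using vertex_bijective_iff[OF G stabilizable] all_vertices_bijective_iff[OF G stabilizable]
  by blast

end
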